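(* For every real $M\ge2$, $$\frac12\log(2M+1)<\frac{M+1}{i}\mathcal{F}_M(iM)=K\Big(\frac{M}{M+1}\Big)<\frac12\Big(\frac{12}{5}+\log(2M+1)\Big),$$ where $\frac{M+1}{i}\mathcal{F}_M(iM)=(M+1)\displaystyle\int_0^M\frac{dt}{\sqrt{(M^2-t^2)((M+1)^2-t^2)}}$ and $K(k)=\displaystyle\int_0^1\frac{dx}{\sqrt{(1-x^2)(1-k^2x^2)}}$ is the complete elliptic integral of the first kind.
   Context: $\mathcal{F}_M(z)=\int_0^z\frac{d\zeta}{\sqrt{(\zeta^2-(iM)^2)(\zeta^2-(i(M+1))^2)}}$, $z$ in the closed left half-plane, with the branch of the square root positive on the positive real axis; $\mathcal{F}_M(iM)$ is the integral along the segment $[0,iM]$ of the imaginary axis. *)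

theory Defs
  imports "HOL-Complex_Analysis.Complex_Analysis"
begin

text \<open>On the segment [0, iM]
  (z = i t, 0 \<le> t \<le> M) the radicand equals (M^2-t^2)((M+1)^2-t^2) \<ge> 0, so the
  principal square root csqrt agrees there with the branch positive on the positive real axis
  (continued into the left half-plane).\<close>
definition FM_integrand :: "real \<Rightarrow> complex \<Rightarrow> complex" where
  "FM_integrand M z = 1 / csqrt ((z^2 - (\<i> * of_real M)^2) * (z^2 - (\<i> * of_real (M+1))^2))"

definition FM_at_iM :: "real \<Rightarrow> complex" where
  "FM_at_iM M = contour_integral (linepath 0 (\<i> * of_real M)) (FM_integrand M)"

definition ellipK :: "real \<Rightarrow> real" where
  "ellipK k = integral {0..1} (\<lambda>x. 1 / sqrt ((1 - x^2) * (1 - k^2 * x^2)))"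

end

theory Submission
  imports Defs
begin

text \<open>
  On the segment from 0 to \<open>iM\<close> the radicand of \<open>F\<^sub>M\<close> is real and nonnegative, and the
  substitution \<open>t = Mx\<close> turns \<open>(M+1)/i \<cdot> F\<^sub>M(iM)\<close> into \<open>K(k)\<close> with \<open>k = M/(M+1)\<close>.
  Split the integrand of \<open>K\<close> as \<open>x/\<surd>((1-x\<^sup>2)(1-k\<^sup>2x\<^sup>2)) + \<surd>(1-x)/\<surd>((1+x)(1-k\<^sup>2x\<^sup>2))\<close>.
  The first part has the elementary primitive \<open>-ln(k\<surd>(1-x\<^sup>2) + \<surd>(1-k\<^sup>2x\<^sup>2))/k\<close> and
  integrates to \<open>ln((1+k)/(1-k))/(2k) = ln(2M+1)/2 + ln(2M+1)/(2M)\<close>; the second lies between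
  0 and \<open>1/(1+x) \<le> 1 - 3x/4 + x\<^sup>2/4\<close>, whose integral is \<open>17/24\<close>. This gives the lower bound,
  and the upper bound follows from \<open>ln(2M+1)/(2M) < 12/25\<close>, a consequence of \<open>ln y \<le> y/e\<close>.
\<close>

lemma power2_mult_power2_less_one:
  fixes k x :: real
  assumes "\<bar>k\<bar> < 1" "\<bar>x\<bar> \<le> 1"
  shows "k^2 * x^2 < 1"
proof -
  have "k^2 * x^2 \<le> k^2" using assms(2) by (simp add: abs_square_le_1 mult_left_le)
  also have "\<dots> < 1" using assms(1) by (simp add: abs_square_less_1)
  finally show ?thesis .
qed

lemma has_real_derivative_ellipK_odd_primitive:
  fixes k x :: real
  assumes k: "0 < k" "k < 1" and x: "0 < x" "x < 1"
  shows "((\<lambda>x. - ln (k * sqrt (1 - x^2) + sqrt (1 - k^2 * x^2)) / k)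
          has_real_derivative x / sqrt ((1 - x^2) * (1 - k^2 * x^2))) (at x)"
proof -
  define S1 where "S1 = sqrt (1 - x^2)"
  define S2 where "S2 = sqrt (1 - k^2 * x^2)"
  have rad: "0 < 1 - x^2" "0 < 1 - k^2 * x^2"
    using x power2_mult_power2_less_one[of k x] k by (simp_all add: abs_square_less_1)
  then have S: "0 < S1" "0 < S2" by (simp_all add: S1_def S2_def)
  have pos: "0 < k * S1 + S2" using S k by (simp add: add_pos_pos)
  \<comment> \<open>the derivative in the form produced by \<open>derivative_eq_intros\<close>\<close>
  have "- ((- (inverse S1 * x * k) - inverse S2 * (x * k^2)) / ((k * S1 + S2) * k))
      = x / (S1 * S2)"
    using S pos k by (simp add: divide_simps) (simp add: power2_eq_square algebra_simps)
  then show ?thesis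
    using pos rad k unfolding real_sqrt_mult
    by (auto intro!: derivative_eq_intros simp flip: S1_def S2_def)
qed

lemma ellipK_odd_part_has_integral:
  fixes k :: real
  assumes k: "0 < k" "k < 1"
  shows "((\<lambda>x. x / sqrt ((1 - x^2) * (1 - k^2 * x^2))) has_integral ln ((1 + k) / (1 - k)) / (2 * k)) {0..1}"
proof -
  define G where "G = (\<lambda>x::real. - ln (k * sqrt (1 - x^2) + sqrt (1 - k^2 * x^2)) / k)"
  have pos: "0 < k * sqrt (1 - x^2) + sqrt (1 - k^2 * x^2)" if "x \<in> {0..1}" for x
  proof -
    have "0 < sqrt (1 - k^2 * x^2)" using power2_mult_power2_less_one[of k x] k that by simp
    moreover have "0 \<le> k * sqrt (1 - x^2)" using k that by (simp add: power_le_one)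
    ultimately show ?thesis by linarith
  qed
  then have "\<forall>x\<in>{0..1}. k * sqrt (1 - x^2) + sqrt (1 - k^2 * x^2) \<noteq> 0"
    by force
  then have "continuous_on {0..1} G"
    unfolding G_def using k by (intro continuous_intros) auto
  moreover have "(G has_real_derivative x / sqrt ((1 - x^2) * (1 - k^2 * x^2))) (at x)"
    if "x \<in> {0<..<1}" for x
    using has_real_derivative_ellipK_odd_primitive[OF k] that by (simp add: G_def)
  ultimately have "((\<lambda>x. x / sqrt ((1 - x^2) * (1 - k^2 * x^2))) has_integral G 1 - G 0) {0..1}"
    by (intro fundamental_theorem_of_calculus_interior) (auto simp: has_real_derivative_iff_has_vector_derivative)
  moreover have "G 1 - G 0 = ln ((1 + k) / (1 - k)) / (2 * k)"
  proof -
    have "1 - k^2 = (1 - k) * (1 + k)" by (simp add: power2_eq_square algebra_simps)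
    then have "ln (sqrt (1 - k^2)) = (ln (1 - k) + ln (1 + k)) / 2"
      using k by (simp add: ln_sqrt ln_mult)
    then show ?thesis using k by (simp add: G_def ln_div field_simps)
  qed
  ultimately show ?thesis by simp
qed

definition ellipK_remainder :: "real \<Rightarrow> real \<Rightarrow> real" where
  "ellipK_remainder k x = sqrt (1 - x) / sqrt ((1 + x) * (1 - k^2 * x^2))"

lemma ellipK_integrand_split:
  fixes k x :: real
  assumes "x \<le> 1"
  shows "1 / sqrt ((1 - x^2) * (1 - k^2 * x^2))
       = x / sqrt ((1 - x^2) * (1 - k^2 * x^2)) + ellipK_remainder k x"
proof (cases "x = 1")
  case False
  with assms have "0 < 1 - x" by simp
  moreover have "(1 - x^2) * (1 - k^2 * x^2) = (1 - x) * ((1 + x) * (1 - k^2 * x^2))"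
    by (simp add: power2_eq_square algebra_simps)
  ultimately have rem: "ellipK_remainder k x = (1 - x) / sqrt ((1 - x^2) * (1 - k^2 * x^2))"
    unfolding ellipK_remainder_def
    by (simp only: real_sqrt_mult[of "1 - x"] divide_divide_eq_left[symmetric] real_div_sqrt less_imp_le)
  show ?thesis unfolding rem by (simp flip: add_divide_distrib)
qed (simp add: ellipK_remainder_def)

lemma ellipK_remainder_nonneg:
  fixes k x :: real
  assumes "\<bar>k\<bar> \<le> 1" "0 \<le> x" "x \<le> 1"
  shows "0 \<le> ellipK_remainder k x"
proof -
  have "k^2 * x^2 \<le> 1" using assms by (simp add: abs_square_le_1 mult_le_one)
  then show ?thesis using assms by (simp add: ellipK_remainder_def)
qed

lemma ellipK_remainder_le:
  fixes k x :: real
  assumes k: "\<bar>k\<bar> \<le> 1" and x: "0 \<le> x" "x \<le> 1"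
  shows "ellipK_remainder k x \<le> 1 / (1 + x)"
proof -
  have "k^2 * x^2 \<le> x^2" using k by (simp add: abs_square_le_1 mult_left_le_one_le)
  then have "(1 - x) * (1 + x)^2 \<le> (1 + x) * (1 - k^2 * x^2)"
    using x mult_left_mono[of "1 - x^2" "1 - k^2 * x^2" "1 + x"]
    by (simp add: power2_eq_square algebra_simps)
  then have "sqrt (1 - x) * (1 + x) \<le> sqrt ((1 + x) * (1 - k^2 * x^2))"
    using x by (metis real_sqrt_le_mono real_sqrt_mult real_sqrt_abs abs_of_nonneg add_nonneg_nonneg zero_le_one)
  moreover have "0 \<le> sqrt ((1 + x) * (1 - k^2 * x^2))"
    using x k by (simp add: abs_square_le_1 mult_le_one)
  ultimately show ?thesis
    using x by (cases "sqrt ((1 + x) * (1 - k^2 * x^2)) = 0")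
      (simp_all add: ellipK_remainder_def divide_simps mult.commute)
qed

lemma continuous_on_ellipK_remainder:
  fixes k :: real
  assumes "\<bar>k\<bar> < 1"
  shows "continuous_on {0..1} (ellipK_remainder k)"
proof -
  have "sqrt ((1 + x) * (1 - k^2 * x^2)) \<noteq> 0" if "x \<in> {0..1}" for x
    using power2_mult_power2_less_one[OF assms, of x] that by simp
  then show ?thesis
    unfolding ellipK_remainder_def by (intro continuous_intros ballI)
qed

lemma integrable_ellipK_remainder: "\<bar>k\<bar> < 1 \<Longrightarrow> ellipK_remainder k integrable_on {0..1}"
  by (rule integrable_continuous_interval[OF continuous_on_ellipK_remainder])

lemma inverse_one_plus_le_quadratic:
  fixes x :: real
  assumes "0 \<le> x"
  shows "1 / (1 + x) \<le> 1 - 3 * x / 4 + x^2 / 4"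
proof -
  have "(1 - 3 * x / 4 + x^2 / 4) * (1 + x) = 1 + x * (1 - x)^2 / 4"
    by (simp add: power2_eq_square field_simps)
  then have "1 \<le> (1 - 3 * x / 4 + x^2 / 4) * (1 + x)" using assms by simp
  then show ?thesis using assms by (simp add: divide_simps)
qed

lemma quadratic_majorant_has_integral:
  "((\<lambda>x::real. 1 - 3 * x / 4 + x^2 / 4) has_integral 17 / 24) {0..1}"
proof -
  define Q where "Q = (\<lambda>x::real. x - 3 * x^2 / 8 + x^3 / 12)"
  have "(Q has_real_derivative 1 - 3 * x / 4 + x^2 / 4) (at x within {0..1})" for x
    unfolding Q_def by (auto intro!: derivative_eq_intros simp: field_simps power2_eq_square)
  then have "((\<lambda>x::real. 1 - 3 * x / 4 + x^2 / 4) has_integral Q 1 - Q 0) {0..1}"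
    by (intro fundamental_theorem_of_calculus) (auto simp: has_real_derivative_iff_has_vector_derivative)
  then show ?thesis by (simp add: Q_def)
qed

lemma integral_ellipK_remainder_bounds:
  fixes k :: real
  assumes "\<bar>k\<bar> < 1"
  shows "0 \<le> integral {0..1} (ellipK_remainder k)"
    and "integral {0..1} (ellipK_remainder k) \<le> 17 / 24"
proof -
  note int = integrable_integral[OF integrable_ellipK_remainder[OF assms]]
  show "0 \<le> integral {0..1} (ellipK_remainder k)"
    using assms by (intro has_integral_nonneg[OF int] ellipK_remainder_nonneg) auto
  show "integral {0..1} (ellipK_remainder k) \<le> 17 / 24"
  proof (rule has_integral_le[OF int quadratic_majorant_has_integral])
    fix x :: real assume "x \<in> {0..1}"
    then show "ellipK_remainder k x \<le> 1 - 3 * x / 4 + x^2 / 4"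
      using assms ellipK_remainder_le[of k x] inverse_one_plus_le_quadratic[of x] by auto
  qed
qed

lemma has_integral_ellipK_decomposition:
  fixes k :: real
  assumes k: "0 < k" "k < 1"
  shows "((\<lambda>x. 1 / sqrt ((1 - x^2) * (1 - k^2 * x^2))) has_integral
           ln ((1 + k) / (1 - k)) / (2 * k) + integral {0..1} (ellipK_remainder k)) {0..1}"
proof -
  have "\<bar>k\<bar> < 1" using k by simp
  from has_integral_add[OF ellipK_odd_part_has_integral[OF k]
      integrable_integral[OF integrable_ellipK_remainder[OF this]]]
  show ?thesis
    by (rule has_integral_eq[rotated]) (simp add: ellipK_integrand_split)
qed

lemma ellipK_decomposition:
  "0 < k \<Longrightarrow> k < 1 \<Longrightarrow>
    ellipK k = ln ((1 + k) / (1 - k)) / (2 * k) + integral {0..1} (ellipK_remainder k)"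
  unfolding ellipK_def by (rule integral_unique[OF has_integral_ellipK_decomposition])

lemma has_integral_ellipK:
  "0 < k \<Longrightarrow> k < 1 \<Longrightarrow> ((\<lambda>x. 1 / sqrt ((1 - x^2) * (1 - k^2 * x^2))) has_integral ellipK k) {0..1}"
  using has_integral_ellipK_decomposition ellipK_decomposition by simp

lemma FM_integrand_linepath:
  fixes M x :: real
  assumes M: "0 < M" and x: "0 \<le> x" "x \<le> 1"
  shows "FM_integrand M (linepath 0 (\<i> * of_real M) x) * (\<i> * of_real M)
       = \<i> / of_real (M + 1) * of_real (1 / sqrt ((1 - x^2) * (1 - (M / (M + 1))^2 * x^2)))"
proof -
  define Q where "Q = (1 - x^2) * (1 - (M / (M + 1))^2 * x^2)"
  have "Q \<ge> 0"
    using M x power2_mult_power2_less_one[of "M / (M + 1)" x]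
    by (simp add: Q_def power_le_one less_imp_le)
  have "(M * (M + 1))^2 * Q = (M^2 * (1 - x^2)) * ((M + 1)^2 * (1 - (M / (M + 1))^2 * x^2))"
    by (simp add: Q_def power_mult_distrib ac_simps)
  also have "(M + 1)^2 * (1 - (M / (M + 1))^2 * x^2) = (M + 1)^2 - (x * M)^2"
    using M by (simp add: power_divide field_simps)
  finally have rad: "((x * M)^2 - M^2) * ((x * M)^2 - (M + 1)^2) = (M * (M + 1))^2 * Q"
    by (simp add: power_mult_distrib algebra_simps)
  have "linepath 0 (\<i> * of_real M) x ^ 2 = - of_real ((x * M)^2)"
    by (simp add: linepath_def scaleR_conv_of_real power_mult_distrib)
  moreover have "(\<i> * of_real r)^2 = - of_real (r^2)" for r :: real
    by (simp add: power_mult_distrib)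
  ultimately have "(linepath 0 (\<i> * of_real M) x ^ 2 - (\<i> * of_real M)^2)
           * (linepath 0 (\<i> * of_real M) x ^ 2 - (\<i> * of_real (M + 1))^2)
           = of_real ((M * (M + 1))^2 * Q)"
    by (simp only: minus_diff_minus) (simp only: minus_mult_minus flip: rad of_real_diff of_real_mult)
  then have "FM_integrand M (linepath 0 (\<i> * of_real M) x) = of_real (1 / (M * (M + 1) * sqrt Q))"
    using M \<open>Q \<ge> 0\<close> by (simp add: FM_integrand_def csqrt_of_real real_sqrt_mult)
  moreover have "1 / (M * (M + 1) * sqrt Q) * M = 1 / (M + 1) * (1 / sqrt Q)"
    using M by simp
  then have "of_real (1 / (M * (M + 1) * sqrt Q)) * (\<i> * of_real M)
      = \<i> * of_real (1 / (M + 1) * (1 / sqrt Q))"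
    by (metis mult.left_commute of_real_mult)
  ultimately show ?thesis
    unfolding Q_def[symmetric] by (simp del: of_real_add)
qed

lemma has_contour_integral_FM_at_iM:
  fixes M :: real
  assumes M: "0 < M"
  shows "(FM_integrand M has_contour_integral \<i> / of_real (M + 1) * of_real (ellipK (M / (M + 1))))
           (linepath 0 (\<i> * of_real M))"
proof -
  have k: "0 < M / (M + 1)" "M / (M + 1) < 1" using M by auto
  show ?thesis
    unfolding has_contour_integral_linepath diff_zero
    by (rule has_integral_eq[OF _ has_integral_mult_right[OF has_integral_of_real[OF has_integral_ellipK[OF k]]]])
      (metis FM_integrand_linepath[OF M] atLeastAtMost_iff)
qed

lemma has_integral_FM_real_form:
  fixes M :: real
  assumes M: "0 < M"
  shows "((\<lambda>t. 1 / sqrt ((M^2 - t^2) * ((M + 1)^2 - t^2))) has_integral ellipK (M / (M + 1)) / (M + 1)) {0..M}"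
proof -
  define k where "k = M / (M + 1)"
  have "0 < k" "k < 1" using M by (auto simp: k_def)
  from has_integral_stretch_real[OF has_integral_divide[OF has_integral_ellipK[OF this], of "M * (M + 1)"], of "1 / M"]
  have "((\<lambda>x. 1 / sqrt ((1 - (x / M)^2) * (1 - k^2 * (x / M)^2)) / (M * (M + 1))) has_integral
          ellipK k / (M + 1)) ((\<lambda>x. x * M) ` {0..1})"
    using M by simp
  moreover have "(\<lambda>x. x * M) ` {0..1} = {0..M}"
    using M image_mult_atLeastAtMost[of M 0 1] by (simp add: mult.commute)
  moreover have "1 / sqrt ((1 - (t / M)^2) * (1 - k^2 * (t / M)^2)) / (M * (M + 1))
      = 1 / sqrt ((M^2 - t^2) * ((M + 1)^2 - t^2))" for t
  proof -
    have "(1 - (t / M)^2) * (1 - k^2 * (t / M)^2) * (M * (M + 1))^2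
        = ((1 - (t / M)^2) * M^2) * ((1 - k^2 * (t / M)^2) * (M + 1)^2)"
      by (simp add: power_mult_distrib ac_simps)
    also have "\<dots> = (M^2 - t^2) * ((M + 1)^2 - t^2)"
      using M by (simp add: k_def power_divide field_simps)
    finally have "sqrt ((1 - (t / M)^2) * (1 - k^2 * (t / M)^2)) * sqrt ((M * (M + 1))^2)
        = sqrt ((M^2 - t^2) * ((M + 1)^2 - t^2))"
      by (simp only: flip: real_sqrt_mult)
    moreover have "sqrt ((M * (M + 1))^2) = M * (M + 1)" using M by simp
    ultimately have "sqrt ((1 - (t / M)^2) * (1 - k^2 * (t / M)^2)) * (M * (M + 1))
        = sqrt ((M^2 - t^2) * ((M + 1)^2 - t^2))"
      by simp
    then show ?thesis by (metis divide_divide_eq_left)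
  qed
  ultimately show ?thesis by (simp only: k_def)
qed

lemma ln_le_divide_exp1:
  fixes y :: real
  assumes "0 < y"
  shows "ln y \<le> y / exp 1"
  using ln_le_minus_one[of "y / exp 1"] assms by (simp add: ln_div)

lemma ln_two_mult_plus_one_div_less:
  fixes M :: real
  assumes "2 \<le> M"
  shows "ln (2 * M + 1) / (2 * M) < 12 / 25"
proof -
  have "ln (2 * M + 1) \<le> (2 * M + 1) / exp 1"
    using assms by (intro ln_le_divide_exp1) simp
  also have "\<dots> < (2 * M + 1) / (27 / 10)"
    using e_approx_32 assms by (intro divide_strict_left_mono) (auto simp: abs_if split: if_splits)
  also have "\<dots> \<le> 24 / 25 * M"
    using assms by simp
  finally show ?thesis using assms by (simp add: field_simps)
qed

theorem lemma14:
  fixes M :: real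
  assumes "M \<ge> 2"
  shows "of_real (M+1) / \<i> * FM_at_iM M
           = of_real ((M+1) * integral {0..M} (\<lambda>t. 1 / sqrt ((M^2 - t^2) * ((M+1)^2 - t^2))))
       \<and> of_real (M+1) / \<i> * FM_at_iM M = of_real (ellipK (M / (M+1)))
       \<and> ln (2*M+1) / 2 < ellipK (M / (M+1))
       \<and> ellipK (M / (M+1)) < (12/5 + ln (2*M+1)) / 2"
proof -
  define k where "k = M / (M + 1)"
  have M: "0 < M" using assms by simp
  have k: "0 < k" "k < 1" using M by (auto simp: k_def)
  have contour: "of_real (M + 1) / \<i> * FM_at_iM M = of_real (ellipK k)"
    using contour_integral_unique[OF has_contour_integral_FM_at_iM[OF M]] M
    by (simp add: FM_at_iM_def k_def del: of_real_add)
  have real_form: "(M + 1) * integral {0..M} (\<lambda>t. 1 / sqrt ((M^2 - t^2) * ((M + 1)^2 - t^2))) = ellipK k"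
    using integral_unique[OF has_integral_FM_real_form[OF M]] M by (simp add: k_def)
  have ratio: "(1 + k) / (1 - k) = 2 * M + 1"
    using M by (simp add: k_def field_simps)
  have "ln ((1 + k) / (1 - k)) / (2 * k) = ln (2 * M + 1) / 2 + ln (2 * M + 1) / (2 * M)"
    unfolding ratio using M by (simp add: k_def field_simps)
  then have decomp: "ellipK k = ln (2 * M + 1) / 2 + ln (2 * M + 1) / (2 * M) + integral {0..1} (ellipK_remainder k)"
    using ellipK_decomposition[OF k] by simp
  have remainder: "0 \<le> integral {0..1} (ellipK_remainder k)" "integral {0..1} (ellipK_remainder k) \<le> 17 / 24"
    using integral_ellipK_remainder_bounds[of k] k by auto
  have "0 < ln (2 * M + 1) / (2 * M)" using M by simp
  then have lower: "ln (2 * M + 1) / 2 < ellipK k"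
    using decomp remainder by linarith
  have upper: "ellipK k < ln (2 * M + 1) / 2 + 6 / 5"
    using decomp remainder ln_two_mult_plus_one_div_less[OF assms] by linarith
  show ?thesis
    unfolding k_def[symmetric] using lower upper contour real_form by simp
qed

end
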